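(* For any sequence of positive integers $(n_k)_{k\ge1}$ with $n_{k+1}>n_k^2$ for all $k\ge1$, there exists an infinite set $\mathcal{K}\subset\mathbb{N}$ such that $$L\Big(\{m\in\mathbb{N}: m\ge2\}\setminus\bigcup_{k\in\mathcal{K}}\{m\in\mathbb{N}: n_k\le m<n_{k+1}\}\Big)$$ is lineable but not densely lineable.
   Context: $\ell^\infty$ is the Banach space of bounded real sequences with the sup norm. For $x\in\ell^\infty$, $L_x$ denotes the set of accumulation points (subsequential limits) of $x$. For a set $A$ of cardinalities, $L(A)=\{x\in\ell^\infty: |L_x|\in A\}$. A subset $Y$ of $\ell^\infty$ is lineable if $Y\cup\{0\}$ contains an infinite-dimensional linear subspace, and densely lineable if it contains such a subspace which is dense in $\ell^\infty$. *)

theory Defs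
  imports "HOL-Analysis.Analysis"
begin

text \<open>ell-infinity is modelled as the Banach space of bounded continuous functions
  nat \<Rightarrow> real (nat carries the discrete topology, so these are exactly the bounded
  real sequences), with the sup norm.\<close>

type_synonym linf = "nat \<Rightarrow>\<^sub>C real"

definition acc_pts :: "(nat \<Rightarrow> real) \<Rightarrow> real set" where
  "acc_pts x = {l. \<exists>r. strict_mono r \<and> (x \<circ> r) \<longlonglongrightarrow> l}"

definition Lcard :: "nat set \<Rightarrow> linf set" where
  "Lcard A = {x. finite (acc_pts (apply_bcontfun x)) \<and> card (acc_pts (apply_bcontfun x)) \<in> A}"

definition lineable :: "linf set \<Rightarrow> bool" where
  "lineable Y \<longleftrightarrow> (\<exists>V. subspace V \<and> V \<subseteq> Y \<union> {0} \<and>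
      (\<exists>B. B \<subseteq> V \<and> independent B \<and> infinite B))"

definition densely_lineable :: "linf set \<Rightarrow> bool" where
  "densely_lineable Y \<longleftrightarrow> (\<exists>V. subspace V \<and> V \<subseteq> Y \<union> {0} \<and>
      (\<exists>B. B \<subseteq> V \<and> independent B \<and> infinite B) \<and> closure V = UNIV)"

end

theory Submission
  imports Defs
begin

text \<open>Read the index m as a pair (row, column) via prod_decode, and let K be the even k \<ge> 2.

  Lineability: on column d put the sequence running periodically through 1, ..., s d, where
  s d = n (2d+3). A nonzero combination whose highest column with nonzero coefficient is d has
  between s d and 1 + (\<Sum>d'\<le>d. s d') \<le> 2 s d < n (2d+4) accumulation points, a number that
  lies in the untouched block [n (2d+3), n (2d+4)).

  Non-density: A misses every [n k, (n k)^2) with k \<in> K. If a dense subspace V of L(A) \<union> {0}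
  existed, pick x_F \<in> V within 1/4 of the indicator of the columns in F, for each of the
  uncountably many F; infinitely many x_F have the same number c of accumulation points, and we
  take a gap [T, T^2) with T > c. Given z \<in> V with fewer than T accumulation points, the joint
  limit points of (z, x_F) cannot be the graph of a function for all these F, since otherwise
  F would be determined by the limits a of z that have a partner b > 1/2. For such an F and
  generic t, z + t x_F has more accumulation points than z but at most (card L_z) c < T^2,
  hence fewer than T. Iterating T times gives a contradiction.\<close>

lemma acc_ptsI: "strict_mono r \<Longrightarrow> (X \<circ> r) \<longlonglongrightarrow> l \<Longrightarrow> l \<in> acc_pts X"
  by (auto simp: acc_pts_def)

lemma acc_pts_const_subsequence:
  fixes r :: "nat \<Rightarrow> nat"
  assumes "strict_mono r" "\<And>j. X (r j) = v"
  shows "v \<in> acc_pts X"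
  using assms by (intro acc_ptsI[of r]) (auto simp: o_def)

lemma acc_pts_const [simp]: "acc_pts (\<lambda>_. c) = {c}"
proof -
  have "l = c" if "l \<in> acc_pts (\<lambda>_. c)" for l
    using that by (auto simp: acc_pts_def o_def LIMSEQ_const_iff)
  moreover have "c \<in> acc_pts (\<lambda>_. c)"
    by (rule acc_pts_const_subsequence[of id]) (auto simp: strict_mono_def)
  ultimately show ?thesis by blast
qed

lemma acc_pts_subset_closed:
  assumes "range X \<subseteq> F" "closed F"
  shows "acc_pts X \<subseteq> F"
proof
  fix l assume "l \<in> acc_pts X"
  then obtain r where "(X \<circ> r) \<longlonglongrightarrow> l" by (auto simp: acc_pts_def)
  then show "l \<in> F"
    using assms by (intro Lim_in_closed_set[of F "X \<circ> r"]) (auto intro!: always_eventually)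
qed

lemma bounded_range_Pair:
  "bounded (range X) \<Longrightarrow> bounded (range Y) \<Longrightarrow> bounded (range (\<lambda>m. (X m, Y m)))"
  by (rule bounded_subset[OF bounded_Times]) auto

lemma convergent_subsequence_pair:
  fixes X :: "nat \<Rightarrow> 'a::heine_borel" and Y :: "nat \<Rightarrow> 'b::heine_borel" and r :: "nat \<Rightarrow> nat"
  assumes "bounded (range X)" "bounded (range Y)" "strict_mono r"
  obtains r' a b where "strict_mono r'" "(X \<circ> (r \<circ> r')) \<longlonglongrightarrow> a" "(Y \<circ> (r \<circ> r')) \<longlonglongrightarrow> b"
proof -
  have "bounded (range (X \<circ> r))" "bounded (range (Y \<circ> r))"
    by (rule bounded_subset[OF assms(1)], force) (rule bounded_subset[OF assms(2)], force)
  then have bnd: "bounded (range (\<lambda>m. (X (r m), Y (r m))))"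
    using bounded_range_Pair by (simp add: o_def)
  obtain r' l where r': "strict_mono r'" "((\<lambda>m. (X (r m), Y (r m))) \<circ> r') \<longlonglongrightarrow> l"
    using bounded_imp_convergent_subsequence[OF bnd] by blast
  have "(X \<circ> (r \<circ> r')) \<longlonglongrightarrow> fst l" "(Y \<circ> (r \<circ> r')) \<longlonglongrightarrow> snd l"
    using tendsto_fst[OF r'(2)] tendsto_snd[OF r'(2)] by (simp_all add: o_def)
  with r'(1) show ?thesis by (rule that)
qed

lemma acc_pts_nonempty:
  assumes "bounded (range X)"
  shows "acc_pts X \<noteq> {}"
  using bounded_imp_convergent_subsequence[OF assms] acc_ptsI by blast

definition joint_acc_pts :: "(nat \<Rightarrow> real) \<Rightarrow> (nat \<Rightarrow> real) \<Rightarrow> (real \<times> real) set" where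
  "joint_acc_pts X Y = {(a, b). \<exists>r. strict_mono r \<and> (X \<circ> r) \<longlonglongrightarrow> a \<and> (Y \<circ> r) \<longlonglongrightarrow> b}"

lemma joint_acc_ptsI:
  "strict_mono r \<Longrightarrow> (X \<circ> r) \<longlonglongrightarrow> a \<Longrightarrow> (Y \<circ> r) \<longlonglongrightarrow> b \<Longrightarrow> (a, b) \<in> joint_acc_pts X Y"
  by (auto simp: joint_acc_pts_def)

lemma joint_acc_pts_subset: "joint_acc_pts X Y \<subseteq> acc_pts X \<times> acc_pts Y"
  by (auto simp: joint_acc_pts_def acc_pts_def)

lemma fst_joint_acc_pts:
  assumes "bounded (range Y)"
  shows "fst ` joint_acc_pts X Y = acc_pts X"
proof
  show "fst ` joint_acc_pts X Y \<subseteq> acc_pts X"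
    using joint_acc_pts_subset by fastforce
next
  show "acc_pts X \<subseteq> fst ` joint_acc_pts X Y"
  proof
    fix a assume "a \<in> acc_pts X"
    then obtain r where r: "strict_mono r" "(X \<circ> r) \<longlonglongrightarrow> a" by (auto simp: acc_pts_def)
    obtain r' b where "strict_mono r'" "(Y \<circ> (r \<circ> r')) \<longlonglongrightarrow> b"
      using convergent_subsequence_pair[OF assms assms r(1)] by metis
    moreover have "(X \<circ> (r \<circ> r')) \<longlonglongrightarrow> a"
      using LIMSEQ_subseq_LIMSEQ[OF r(2) \<open>strict_mono r'\<close>] by (simp add: o_assoc)
    ultimately have "(a, b) \<in> joint_acc_pts X Y"
      using r(1) by (intro joint_acc_ptsI[of "r \<circ> r'"] strict_mono_o)
    then show "a \<in> fst ` joint_acc_pts X Y" by force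
  qed
qed

lemma acc_pts_add_scaled:
  fixes X Y :: "nat \<Rightarrow> real"
  assumes "bounded (range X)" "bounded (range Y)"
  shows "acc_pts (\<lambda>m. X m + t * Y m) = (\<lambda>(a, b). a + t * b) ` joint_acc_pts X Y"
proof
  show "(\<lambda>(a, b). a + t * b) ` joint_acc_pts X Y \<subseteq> acc_pts (\<lambda>m. X m + t * Y m)"
  proof clarify
    fix a b assume "(a, b) \<in> joint_acc_pts X Y"
    then obtain r where "strict_mono r" "(X \<circ> r) \<longlonglongrightarrow> a" "(Y \<circ> r) \<longlonglongrightarrow> b"
      by (auto simp: joint_acc_pts_def)
    then show "a + t * b \<in> acc_pts (\<lambda>m. X m + t * Y m)"
      by (intro acc_ptsI[of r]) (auto simp: o_def intro!: tendsto_intros)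
  qed
next
  show "acc_pts (\<lambda>m. X m + t * Y m) \<subseteq> (\<lambda>(a, b). a + t * b) ` joint_acc_pts X Y"
  proof
    fix l assume "l \<in> acc_pts (\<lambda>m. X m + t * Y m)"
    then obtain r where r: "strict_mono r" "((\<lambda>m. X m + t * Y m) \<circ> r) \<longlonglongrightarrow> l"
      by (auto simp: acc_pts_def)
    obtain r' a b where r': "strict_mono r'" "(X \<circ> (r \<circ> r')) \<longlonglongrightarrow> a" "(Y \<circ> (r \<circ> r')) \<longlonglongrightarrow> b"
      using convergent_subsequence_pair[OF assms r(1)] by metis
    have "((\<lambda>m. X m + t * Y m) \<circ> (r \<circ> r')) \<longlonglongrightarrow> l"
      using LIMSEQ_subseq_LIMSEQ[OF r(2) r'(1)] by (simp add: o_assoc)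
    moreover have "((\<lambda>m. X m + t * Y m) \<circ> (r \<circ> r')) \<longlonglongrightarrow> a + t * b"
      using r'(2,3) by (auto simp: o_def intro!: tendsto_intros)
    ultimately have "l = a + t * b" by (rule LIMSEQ_unique)
    moreover have "(a, b) \<in> joint_acc_pts X Y"
      using r(1) r' by (intro joint_acc_ptsI[of "r \<circ> r'"] strict_mono_o)
    ultimately show "l \<in> (\<lambda>(a, b). a + t * b) ` joint_acc_pts X Y" by force
  qed
qed

lemma prod_encode_less_fst: "a < b \<Longrightarrow> prod_encode (a, i) < prod_encode (b, i)"
proof -
  assume "a < b"
  then have "triangle (Suc (a + i)) \<le> triangle (b + i)"
    unfolding triangle_def by (intro div_le_mono mult_le_mono) auto
  then show ?thesis by (simp add: prod_encode_def)
qed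

definition column_indicator :: "nat set \<Rightarrow> nat \<Rightarrow> real" where
  "column_indicator F m = (if snd (prod_decode m) \<in> F then 1 else 0)"

lemma column_indicator_bcontfun: "column_indicator F \<in> bcontfun"
  by (rule bcontfun_normI[where b = 1]) (auto simp: column_indicator_def)

lemma joint_acc_pts_separate_columns:
  fixes Z X Y :: "nat \<Rightarrow> real"
  assumes bounded: "bounded (range Z)" "bounded (range X)" "bounded (range Y)"
    and approx: "\<And>m. \<bar>X m - column_indicator F m\<bar> < 1/4" "\<And>m. \<bar>Y m - column_indicator G m\<bar> < 1/4"
    and i: "i \<in> F" "i \<notin> G"
  obtains a b c where "(a, b) \<in> joint_acc_pts Z X" "(a, c) \<in> joint_acc_pts Z Y" "b > 1/2" "c < 1/2"
proof -
  define r where "r j = prod_encode (j, i)" for j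
  have r: "strict_mono r"
    unfolding r_def by (rule strict_monoI) (rule prod_encode_less_fst)
  have on_column: "X (r j) \<ge> 3/4" "Y (r j) \<le> 1/4" for j
  proof -
    have "column_indicator F (r j) = 1" "column_indicator G (r j) = 0"
      using i by (simp_all add: r_def column_indicator_def)
    then show "X (r j) \<ge> 3/4" "Y (r j) \<le> 1/4"
      using approx(1)[of "r j", unfolded abs_less_iff] approx(2)[of "r j", unfolded abs_less_iff]
      by simp_all
  qed
  obtain r' a l where r': "strict_mono r'" "(Z \<circ> (r \<circ> r')) \<longlonglongrightarrow> a"
      "((\<lambda>m. (X m, Y m)) \<circ> (r \<circ> r')) \<longlonglongrightarrow> l"
    using convergent_subsequence_pair[OF bounded(1) bounded_range_Pair[OF bounded(2,3)] r] by metis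
  have X: "(X \<circ> (r \<circ> r')) \<longlonglongrightarrow> fst l" and Y: "(Y \<circ> (r \<circ> r')) \<longlonglongrightarrow> snd l"
    using tendsto_fst[OF r'(3)] tendsto_snd[OF r'(3)] by (simp_all add: o_def)
  have "fst l \<ge> 3/4" using on_column(1) by (intro LIMSEQ_le_const[OF X]) auto
  moreover have "snd l \<le> 1/4" using on_column(2) by (intro LIMSEQ_le_const2[OF Y]) auto
  moreover have "strict_mono (r \<circ> r')" using r r'(1) by (rule strict_mono_o)
  ultimately show ?thesis
    using that[of a "fst l" "snd l"] joint_acc_ptsI[of "r \<circ> r'"] r'(2) X Y by simp
qed

lemma finite_single_valued_joint_acc_pts:
  fixes Z :: "nat \<Rightarrow> real" and X :: "nat set \<Rightarrow> nat \<Rightarrow> real"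
  assumes "bounded (range Z)" "finite (acc_pts Z)"
    and "\<And>F. bounded (range (X F))" "\<And>F m. \<bar>X F m - column_indicator F m\<bar> < 1/4"
  shows "finite {F. single_valued (joint_acc_pts Z (X F))}"
proof -
  define \<Phi> where "\<Phi> F = {a. \<exists>b > 1/2. (a, b) \<in> joint_acc_pts Z (X F)}" for F
  let ?S = "{F. single_valued (joint_acc_pts Z (X F))}"
  have separate: "\<Phi> F \<noteq> \<Phi> G" if G: "G \<in> ?S" and i: "i \<in> F" "i \<notin> G" for F G i
  proof -
    obtain a b c where ab: "(a, b) \<in> joint_acc_pts Z (X F)" "b > 1/2"
      and ac: "(a, c) \<in> joint_acc_pts Z (X G)" "c < 1/2"
      using joint_acc_pts_separate_columns[OF assms(1,3,3,4,4) i] by metis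
    have "a \<in> \<Phi> F" using ab by (auto simp: \<Phi>_def)
    moreover have "a \<notin> \<Phi> G"
    proof
      assume "a \<in> \<Phi> G"
      then obtain b' where "b' > 1/2" "(a, b') \<in> joint_acc_pts Z (X G)"
        by (auto simp: \<Phi>_def)
      moreover have "b' = c" if "(a, b') \<in> joint_acc_pts Z (X G)"
        using G ac(1) that unfolding single_valued_def by blast
      ultimately show False using ac(2) by simp
    qed
    ultimately show ?thesis by blast
  qed
  have "inj_on \<Phi> ?S"
  proof (rule inj_onI)
    fix F G assume "F \<in> ?S" "G \<in> ?S" "\<Phi> F = \<Phi> G"
    then show "F = G" using separate by blast
  qed
  moreover have "\<Phi> ` ?S \<subseteq> Pow (acc_pts Z)"
    unfolding \<Phi>_def using joint_acc_pts_subset by blast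
  ultimately show ?thesis
    using inj_on_finite assms(2) by blast
qed

lemma inj_on_generic_projection:
  fixes P :: "(real \<times> real) set"
  assumes "finite P"
  obtains t where "inj_on (\<lambda>(a, b). a + t * b) P"
proof -
  define bad where "bad = (\<lambda>((a, b), (a', b')). (a' - a) / (b - b')) ` (P \<times> P)"
  obtain t where t: "t \<notin> bad"
    using ex_new_if_finite[OF infinite_UNIV_char_0, of bad] assms by (auto simp: bad_def)
  have "inj_on (\<lambda>(a, b). a + t * b) P"
  proof (rule inj_onI, clarify)
    fix a b a' b' assume P: "(a, b) \<in> P" "(a', b') \<in> P" and eq: "a + t * b = a' + t * b'"
    show "a = a' \<and> b = b'"
    proof (cases "b = b'")
      case False
      then have "t = (a' - a) / (b - b')" using eq by (simp add: field_simps)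
      then have "t \<in> bad" using P by (force simp: bad_def)
      with t show ?thesis by simp
    qed (use eq in simp)
  qed
  then show ?thesis by (rule that)
qed

lemma card_acc_pts_generic_combination:
  fixes Z X :: "nat \<Rightarrow> real"
  assumes "bounded (range Z)" "bounded (range X)" "finite (acc_pts Z)" "finite (acc_pts X)"
    and "\<not> single_valued (joint_acc_pts Z X)"
  obtains t where "card (acc_pts Z) < card (acc_pts (\<lambda>m. Z m + t * X m))"
    "card (acc_pts (\<lambda>m. Z m + t * X m)) \<le> card (acc_pts Z) * card (acc_pts X)"
proof -
  let ?J = "joint_acc_pts Z X"
  have fin: "finite ?J"
    using assms(3,4) by (rule finite_subset[OF joint_acc_pts_subset finite_cartesian_product])
  obtain t where "inj_on (\<lambda>(a, b). a + t * b) ?J"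
    using inj_on_generic_projection[OF fin] by metis
  then have card_eq: "card (acc_pts (\<lambda>m. Z m + t * X m)) = card ?J"
    by (simp add: acc_pts_add_scaled[OF assms(1,2)] card_image)
  have "\<not> inj_on fst ?J"
    using assms(5) unfolding single_valued_def inj_on_def by (metis fst_conv snd_conv)
  then have "card (fst ` ?J) \<noteq> card ?J"
    using eq_card_imp_inj_on[OF fin] by blast
  then have "card (acc_pts Z) < card ?J"
    using card_image_le[OF fin, of fst] by (simp add: fst_joint_acc_pts[OF assms(2)])
  moreover have "card ?J \<le> card (acc_pts Z) * card (acc_pts X)"
    using card_mono[OF _ joint_acc_pts_subset] assms(3,4) by (simp add: card_cartesian_product)
  ultimately show ?thesis using that[of t] card_eq by simp
qed

lemma uncountable_UNIV_nat_set: "uncountable (UNIV :: nat set set)"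
proof
  assume "countable (UNIV :: nat set set)"
  then have "\<exists>f :: nat \<Rightarrow> nat set. range f = UNIV"
    using uncountable_def[of "UNIV :: nat set set"] by simp
  then obtain f :: "nat \<Rightarrow> nat set" where "f ` UNIV = Pow UNIV"
    by auto
  then show False using Cantors_theorem[of UNIV] by blast
qed

lemma ex_infinite_fibre_nat_set:
  fixes f :: "nat set \<Rightarrow> nat"
  shows "\<exists>c. infinite {F. f F = c}"
proof (rule ccontr)
  assume "\<nexists>c. infinite {F. f F = c}"
  then have "countable {F. f F = c}" for c
    by (simp add: countable_finite)
  then have "countable (\<Union>c. {F. f F = c})"
    by (intro countable_UN) auto
  moreover have "(\<Union>c. {F. f F = c}) = UNIV" by auto
  ultimately show False using uncountable_UNIV_nat_set by simp
qed

abbreviation acc_ptsC :: "linf \<Rightarrow> real set" where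
  "acc_ptsC x \<equiv> acc_pts (apply_bcontfun x)"

lemma finite_acc_ptsC_if_Lcard: "x \<in> Lcard A \<union> {0} \<Longrightarrow> finite (acc_ptsC x)"
  unfolding Lcard_def by auto

lemma card_acc_ptsC_pos: "finite (acc_ptsC x) \<Longrightarrow> 0 < card (acc_ptsC x)"
  using acc_pts_nonempty[OF bounded_apply_bcontfun] by (simp add: card_gt_0_iff)

lemma exists_more_acc_pts_in_subspace:
  fixes V :: "linf set" and x :: "nat set \<Rightarrow> linf"
  assumes V: "subspace V" "V \<subseteq> Lcard A \<union> {0}"
    and x: "\<And>F. x F \<in> V" "\<And>F m. \<bar>apply_bcontfun (x F) m - column_indicator F m\<bar> < 1/4"
    and C: "infinite C" "\<And>F. F \<in> C \<Longrightarrow> card (acc_ptsC (x F)) = c"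
    and gap: "A \<inter> {T..<T * T} = {}" "c < T"
    and z: "z \<in> V" "card (acc_ptsC z) < T"
  obtains w where "w \<in> V" "card (acc_ptsC z) < card (acc_ptsC w)" "card (acc_ptsC w) < T"
proof -
  let ?Z = "apply_bcontfun z"
  have finZ: "finite (acc_pts ?Z)"
    using z(1) V(2) finite_acc_ptsC_if_Lcard by blast
  have "finite {F. single_valued (joint_acc_pts ?Z (apply_bcontfun (x F)))}"
    by (rule finite_single_valued_joint_acc_pts[OF _ finZ _ x(2)]) simp_all
  then have "\<not> C \<subseteq> {F. single_valued (joint_acc_pts ?Z (apply_bcontfun (x F)))}"
    using C(1) finite_subset by blast
  then obtain F where F: "F \<in> C" "\<not> single_valued (joint_acc_pts ?Z (apply_bcontfun (x F)))"
    by blast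
  let ?X = "apply_bcontfun (x F)"
  have finX: "finite (acc_pts ?X)"
    using x(1) V(2) finite_acc_ptsC_if_Lcard by blast
  obtain t where t: "card (acc_pts ?Z) < card (acc_pts (\<lambda>m. ?Z m + t * ?X m))"
    "card (acc_pts (\<lambda>m. ?Z m + t * ?X m)) \<le> card (acc_pts ?Z) * card (acc_pts ?X)"
    using card_acc_pts_generic_combination[OF _ _ finZ finX F(2)] by (metis bounded_apply_bcontfun)
  define w where "w = z + t *\<^sub>R x F"
  have w: "apply_bcontfun w = (\<lambda>m. ?Z m + t * ?X m)"
    by (auto simp: w_def)
  have "w \<in> V"
    unfolding w_def using V(1) z(1) x(1) by (intro subspace_add subspace_scale)
  moreover have "w \<noteq> 0"
  proof
    assume "w = 0"
    then have "card (acc_ptsC w) = 1" by simp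
    then show False using t(1) card_acc_ptsC_pos[OF finZ] w by simp
  qed
  ultimately have "w \<in> Lcard A"
    using V(2) by blast
  then have "card (acc_ptsC w) \<notin> {T..<T * T}"
    using gap(1) unfolding Lcard_def by blast
  moreover have "card (acc_ptsC w) \<le> card (acc_pts ?Z) * c"
    using t(2) C(2)[OF F(1)] w by simp
  moreover have "card (acc_pts ?Z) * c < T * T"
    using z(2) gap(2) by (intro mult_strict_mono) auto
  ultimately have "card (acc_ptsC w) < T"
    by simp
  moreover have "card (acc_ptsC z) < card (acc_ptsC w)"
    using t(1) w by simp
  ultimately show ?thesis using \<open>w \<in> V\<close> that by blast
qed

lemma not_densely_lineable_Lcard_if_gaps:
  assumes gaps: "\<And>c. \<exists>T > c. A \<inter> {T..<T * T} = {}"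
  shows "\<not> densely_lineable (Lcard A)"
proof
  assume "densely_lineable (Lcard A)"
  then obtain V where V: "subspace V" "V \<subseteq> Lcard A \<union> {0}" "closure V = UNIV"
    unfolding densely_lineable_def by meson
  have "\<exists>v\<in>V. dist v (Bcontfun (column_indicator F)) < 1/4" for F
  proof -
    have "Bcontfun (column_indicator F) \<in> closure V" by (simp only: V(3) UNIV_I)
    moreover have "(1/4 :: real) > 0" by simp
    ultimately show ?thesis unfolding closure_approachable by blast
  qed
  then obtain x where x: "\<And>F. x F \<in> V" "\<And>F. dist (x F) (Bcontfun (column_indicator F)) < 1/4"
    by metis
  have approx: "\<bar>apply_bcontfun (x F) m - column_indicator F m\<bar> < 1/4" for F m
    using dist_bounded[of "x F" m "Bcontfun (column_indicator F)"] x(2)[of F]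
    by (simp add: Bcontfun_inverse[OF column_indicator_bcontfun] dist_real_def)
  obtain c where C: "infinite {F. card (acc_ptsC (x F)) = c}"
    using ex_infinite_fibre_nat_set[of "\<lambda>F. card (acc_ptsC (x F))"] by blast
  obtain T where T: "c < T" "A \<inter> {T..<T * T} = {}"
    using gaps by blast
  have "\<exists>z\<in>V. i \<le> card (acc_ptsC z) \<and> card (acc_ptsC z) < T" for i
  proof (induction i)
    case 0
    obtain F where "card (acc_ptsC (x F)) = c"
      using infinite_imp_nonempty[OF C] by blast
    then show ?case using x(1) T(1) by (intro bexI[of _ "x F"]) auto
  next
    case (Suc i)
    then obtain z where z: "z \<in> V" "i \<le> card (acc_ptsC z)" "card (acc_ptsC z) < T" by blast
    obtain w where "w \<in> V" "card (acc_ptsC z) < card (acc_ptsC w)" "card (acc_ptsC w) < T"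
      using exists_more_acc_pts_in_subspace[OF V(1,2) x(1) approx C _ T(2,1) z(1,3)] by blast
    then show ?case using z(2) by (intro bexI[of _ w]) auto
  qed
  from this[of T] show False by (meson leD)
qed

lemma apply_bcontfun_sum: "apply_bcontfun (\<Sum>d\<in>D. g d) m = (\<Sum>d\<in>D. apply_bcontfun (g d) m)"
  by (induction D rule: infinite_finite_induct) auto

lemma inj_independent_if_biorthogonal:
  fixes e :: "nat \<Rightarrow> linf" and p :: "nat \<Rightarrow> nat"
  assumes biorth: "\<And>d d'. apply_bcontfun (e d) (p d') = (if d = d' then 1 else 0)"
  shows "inj e" "independent (range e)"
proof -
  show "inj e"
  proof (rule injI)
    fix d d' assume "e d = e d'"
    then have "apply_bcontfun (e d) (p d) = apply_bcontfun (e d') (p d)" by simp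
    then show "d = d'" by (simp add: biorth split: if_splits)
  qed
  show "independent (range e)"
    unfolding independent_explicit_finite_subsets
  proof (intro allI impI ballI)
    fix t u v assume t: "t \<subseteq> range e" "finite t" and sum0: "(\<Sum>w\<in>t. u w *\<^sub>R w) = 0"
      and v: "v \<in> t"
    obtain d where d: "v = e d" using v t(1) by blast
    have others: "apply_bcontfun w (p d) = 0" if "w \<in> t - {v}" for w
      using that t(1) d biorth by auto
    have "0 = apply_bcontfun (\<Sum>w\<in>t. u w *\<^sub>R w) (p d)" by (simp add: sum0)
    also have "\<dots> = u v * apply_bcontfun v (p d) + (\<Sum>w\<in>t - {v}. u w * apply_bcontfun w (p d))"
      by (simp add: apply_bcontfun_sum sum.remove[OF t(2) v])
    also have "\<dots> = u v"
      using others by (simp add: d biorth)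
    finally show "u v = 0" by simp
  qed
qed

lemma lineable_if_independent_family:
  fixes e :: "nat \<Rightarrow> linf"
  assumes "inj e" "independent (range e)"
    and comb: "\<And>D c. finite D \<Longrightarrow> (\<Sum>d\<in>D. c d *\<^sub>R e d) \<noteq> 0 \<Longrightarrow> (\<Sum>d\<in>D. c d *\<^sub>R e d) \<in> Y"
  shows "lineable Y"
proof -
  have "span (range e) \<subseteq> Y \<union> {0}"
  proof
    fix x assume "x \<in> span (range e)"
    then obtain t r where t: "finite t" "t \<subseteq> range e" "x = (\<Sum>a\<in>t. r a *\<^sub>R a)"
      unfolding span_explicit by blast
    define D where "D = e -` t"
    have "finite D" unfolding D_def using t(1) assms(1) by (simp add: finite_vimageI)
    moreover have "x = (\<Sum>d\<in>D. r (e d) *\<^sub>R e d)"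
    proof -
      have "t = e ` D" using t(2) by (auto simp: D_def)
      then show ?thesis
        using t(3) assms(1) by (simp add: sum.reindex inj_on_def)
    qed
    ultimately show "x \<in> Y \<union> {0}" using comb[of D "\<lambda>d. r (e d)"] by blast
  qed
  moreover have "\<exists>B. B \<subseteq> span (range e) \<and> independent B \<and> infinite B"
    using assms(2) range_inj_infinite[OF assms(1)] by (intro exI[of _ "range e"]) (auto intro: span_base)
  ultimately show ?thesis
    unfolding lineable_def using subspace_span by (intro exI[of _ "span (range e)"]) simp
qed

definition block_seq :: "nat \<Rightarrow> nat \<Rightarrow> nat \<Rightarrow> real" where
  "block_seq p d m = (if snd (prod_decode m) = d then real (fst (prod_decode m) mod p) + 1 else 0)"

lemma block_seq_bcontfun: "0 < p \<Longrightarrow> block_seq p d \<in> bcontfun"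
  by (rule bcontfun_normI[where b = "real p + 1"]) (auto simp: block_seq_def less_imp_le)

lemma apply_block_combination:
  assumes "\<And>d. 0 < s d" "finite D"
  shows "apply_bcontfun (\<Sum>d\<in>D. c d *\<^sub>R Bcontfun (block_seq (s d) d)) m =
    (if snd (prod_decode m) \<in> D
     then c (snd (prod_decode m)) * (real (fst (prod_decode m) mod s (snd (prod_decode m))) + 1)
     else 0)"
proof -
  have "apply_bcontfun (\<Sum>d\<in>D. c d *\<^sub>R Bcontfun (block_seq (s d) d)) m
      = (\<Sum>d\<in>D. if snd (prod_decode m) = d then c d * (real (fst (prod_decode m) mod s d) + 1) else 0)"
    using assms(1) by (simp add: apply_bcontfun_sum Bcontfun_inverse[OF block_seq_bcontfun] block_seq_def
        if_distrib cong: if_cong)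
  also have "\<dots> = (if snd (prod_decode m) \<in> D
     then c (snd (prod_decode m)) * (real (fst (prod_decode m) mod s (snd (prod_decode m))) + 1)
     else 0)"
    using assms(2) by (simp add: sum.delta)
  finally show ?thesis .
qed

lemma card_acc_pts_block_combination:
  fixes s :: "nat \<Rightarrow> nat" and c :: "nat \<Rightarrow> real"
  assumes s: "\<And>d. 0 < s d" and D: "finite D" and dmax: "dmax \<in> D" "c dmax \<noteq> 0"
    and top: "\<And>d. d \<in> D \<Longrightarrow> c d \<noteq> 0 \<Longrightarrow> d \<le> dmax"
  defines "x \<equiv> (\<Sum>d\<in>D. c d *\<^sub>R Bcontfun (block_seq (s d) d))"
  shows "finite (acc_ptsC x)" "s dmax \<le> card (acc_ptsC x)" "card (acc_ptsC x) \<le> 1 + (\<Sum>d\<le>dmax. s d)"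
proof -
  let ?X = "apply_bcontfun x"
  let ?values = "\<lambda>d. (\<lambda>k. c d * (real k + 1)) ` {..<s d}"
  define D' where "D' = {d \<in> D. c d \<noteq> 0}"
  define F where "F = insert 0 (\<Union>d\<in>D'. ?values d)"
  have X: "?X m = (if snd (prod_decode m) \<in> D
      then c (snd (prod_decode m)) * (real (fst (prod_decode m) mod s (snd (prod_decode m))) + 1)
      else 0)" for m
    unfolding x_def by (rule apply_block_combination[OF s D])
  have finD': "finite D'" using D by (simp add: D'_def)
  have finF: "finite F" using finD' by (simp add: F_def)
  have "range ?X \<subseteq> F"
    using s by (auto simp: X F_def D'_def)
  then have accF: "acc_pts ?X \<subseteq> F"
    using finF by (intro acc_pts_subset_closed finite_imp_closed)
  then show fin: "finite (acc_ptsC x)" using finF by (rule finite_subset)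
  have "?values dmax \<subseteq> acc_pts ?X"
  proof
    fix y assume "y \<in> ?values dmax"
    then obtain k where k: "k < s dmax" "y = c dmax * (real k + 1)" by auto
    have "strict_mono (\<lambda>j. prod_encode (k + j * s dmax, dmax))"
      using s[of dmax] by (intro strict_monoI prod_encode_less_fst) simp
    moreover have "?X (prod_encode (k + j * s dmax, dmax)) = y" for j
      using k dmax by (simp add: X)
    ultimately show "y \<in> acc_pts ?X" by (rule acc_pts_const_subsequence)
  qed
  moreover have "card (?values dmax) = s dmax"
    using dmax(2) by (subst card_image) (auto simp: inj_on_def)
  ultimately show "s dmax \<le> card (acc_ptsC x)"
    using card_mono[OF fin] by metis
  have "card F \<le> 1 + card (\<Union>d\<in>D'. ?values d)"
    unfolding F_def by (simp add: card_insert_le_m1 card_insert_if)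
  also have "card (\<Union>d\<in>D'. ?values d) \<le> (\<Sum>d\<in>D'. card (?values d))"
    by (rule card_UN_le[OF finD'])
  also have "\<dots> \<le> (\<Sum>d\<in>D'. s d)"
    by (rule sum_mono) (metis card_image_le card_lessThan finite_lessThan)
  also have "\<dots> \<le> (\<Sum>d\<le>dmax. s d)"
    by (rule sum_mono2) (auto simp: D'_def top)
  finally show "card (acc_ptsC x) \<le> 1 + (\<Sum>d\<le>dmax. s d)"
    using card_mono[OF finF accF] by simp
qed

lemma lineable_Lcard_if_blocks:
  fixes s :: "nat \<Rightarrow> nat"
  assumes s: "\<And>d. 0 < s d"
    and blocks: "\<And>d m. s d \<le> m \<Longrightarrow> m \<le> 1 + (\<Sum>d'\<le>d. s d') \<Longrightarrow> m \<in> A"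
  shows "lineable (Lcard A)"
proof -
  define e where "e d = Bcontfun (block_seq (s d) d)" for d
  have "apply_bcontfun (e d) (prod_encode (0, d')) = (if d = d' then 1 else 0)" for d d'
    using s by (auto simp: e_def Bcontfun_inverse[OF block_seq_bcontfun] block_seq_def)
  note e = inj_independent_if_biorthogonal[OF this]
  show ?thesis
  proof (rule lineable_if_independent_family[OF e])
    fix D and c :: "nat \<Rightarrow> real"
    assume D: "finite D" and nz: "(\<Sum>d\<in>D. c d *\<^sub>R e d) \<noteq> 0"
    define D' where "D' = {d \<in> D. c d \<noteq> 0}"
    have "D' \<noteq> {}"
    proof
      assume "D' = {}"
      then have "(\<Sum>d\<in>D. c d *\<^sub>R e d) = 0" by (intro sum.neutral) (auto simp: D'_def)
      with nz show False ..
    qed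
    moreover have "finite D'" using D by (simp add: D'_def)
    ultimately have "Max D' \<in> D'" "\<And>d. d \<in> D' \<Longrightarrow> d \<le> Max D'" by simp_all
    then have "Max D' \<in> D" "c (Max D') \<noteq> 0" "\<And>d. d \<in> D \<Longrightarrow> c d \<noteq> 0 \<Longrightarrow> d \<le> Max D'"
      by (auto simp: D'_def)
    note card = card_acc_pts_block_combination[where s = s and c = c and dmax = "Max D'", OF s D this]
    show "(\<Sum>d\<in>D. c d *\<^sub>R e d) \<in> Lcard A"
      using card blocks unfolding e_def Lcard_def by blast
  qed
qed

locale superquadratic =
  fixes n :: "nat \<Rightarrow> nat"
  assumes pos: "\<And>k. k \<ge> 1 \<Longrightarrow> n k > 0"
    and growth: "\<And>k. k \<ge> 1 \<Longrightarrow> n (k + 1) > (n k)\<^sup>2"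
begin

lemma n_less_next: "1 \<le> k \<Longrightarrow> n k < n (k + 1)"
  using growth[of k] pos[of k] by (simp add: power2_eq_square) (metis le_less_trans le_square)

lemma n_strict_mono: "1 \<le> a \<Longrightarrow> a < b \<Longrightarrow> n a < n b"
proof -
  assume a: "1 \<le> a" and "a < b"
  then have "Suc a \<le> b" by simp
  then show "n a < n b"
  proof (induction b rule: dec_induct)
    case base then show ?case using n_less_next[OF a] by simp
  next
    case (step m) then show ?case using n_less_next[of m] a by simp
  qed
qed

lemma n_mono: "1 \<le> a \<Longrightarrow> a \<le> b \<Longrightarrow> n a \<le> n b"
  using n_strict_mono[of a b] by (cases "a = b") auto

lemma index_le_n: "1 \<le> k \<Longrightarrow> k \<le> n k"
proof (induction k rule: dec_induct)
  case base then show ?case using pos[of 1] by simp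
next
  case (step k) then show ?case using n_less_next[of k] by simp
qed

lemma double_n_less_next: "2 \<le> k \<Longrightarrow> 2 * n k < n (k + 1)"
proof -
  assume k: "2 \<le> k"
  then have "2 * n k \<le> (n k)\<^sup>2"
    using index_le_n[of k] by (simp add: power2_eq_square)
  then show ?thesis using growth[of k] k by simp
qed

definition K :: "nat set" where
  "K = {k. 2 \<le> k \<and> even k}"

definition A :: "nat set" where
  "A = {m. m \<ge> 2} - (\<Union>k\<in>K. {m. n k \<le> m \<and> m < n (k + 1)})"

lemma infinite_K: "infinite K"
  unfolding infinite_nat_iff_unbounded
proof
  fix m show "\<exists>k > m. k \<in> K" by (intro exI[of _ "2 * m + 2"]) (simp add: K_def)
qed

lemma interval_subset_A:
  assumes "3 \<le> k" "odd k"
  shows "{n k..<n (k + 1)} \<subseteq> A"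
proof
  fix m assume m: "m \<in> {n k..<n (k + 1)}"
  have "\<not> (n k' \<le> m \<and> m < n (k' + 1))" if "k' \<in> K" for k'
  proof -
    have "k' \<noteq> k" using that assms by (auto simp: K_def)
    then have "k' + 1 \<le> k \<or> k + 1 \<le> k'" by linarith
    then show ?thesis
      using m n_mono[of "k' + 1" k] n_mono[of "k + 1" k'] that assms
      by (auto simp: K_def)
  qed
  moreover have "2 \<le> m"
    using m index_le_n[of k] assms by simp
  ultimately show "m \<in> A" by (auto simp: A_def)
qed

definition block_length :: "nat \<Rightarrow> nat" where
  "block_length d = n (2 * d + 3)"

lemma block_length_pos: "0 < block_length d"
  by (simp add: block_length_def pos)

lemma sum_block_length_le: "1 + (\<Sum>d'\<le>d. block_length d') \<le> 2 * block_length d"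
proof (induction d)
  case 0 then show ?case using block_length_pos[of 0] by simp
next
  case (Suc d)
  have "2 * n (2 * d + 3) < n (2 * d + 3 + 1)"
    by (rule double_n_less_next) simp
  also have "\<dots> \<le> n (2 * d + 5)"
    by (rule n_mono) auto
  finally have "2 * block_length d < block_length (Suc d)"
    by (simp add: block_length_def algebra_simps)
  then show ?case using Suc.IH by simp
qed

lemma blocks_in_A:
  assumes "block_length d \<le> m" "m \<le> 1 + (\<Sum>d'\<le>d. block_length d')"
  shows "m \<in> A"
proof -
  have "m < n (2 * d + 3 + 1)"
    using assms(2) sum_block_length_le[of d] double_n_less_next[of "2 * d + 3"]
    by (simp add: block_length_def)
  then show ?thesis
    using assms(1) interval_subset_A[of "2 * d + 3"] by (auto simp: block_length_def)
qed

lemma gaps_in_A: "\<exists>T > c. A \<inter> {T..<T * T} = {}"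
proof (intro exI conjI)
  define j where "j = 2 * c + 2"
  have j: "j \<in> K" by (simp add: K_def j_def)
  show "c < n j" using index_le_n[of j] by (simp add: j_def)
  have "n j * n j < n (j + 1)" using growth[of j] by (simp add: j_def power2_eq_square)
  then show "A \<inter> {n j..<n j * n j} = {}"
    using j by (auto simp: A_def)
qed

end

theorem corollary2p9:
  fixes n :: "nat \<Rightarrow> nat"
  assumes pos: "\<And>k. k \<ge> 1 \<Longrightarrow> n k > 0"
    and growth: "\<And>k. k \<ge> 1 \<Longrightarrow> n (k + 1) > (n k)\<^sup>2"
  shows "\<exists>K. K \<subseteq> {1..} \<and> infinite K \<and>
    lineable (Lcard ({m. m \<ge> 2} - (\<Union>k\<in>K. {m. n k \<le> m \<and> m < n (k + 1)}))) \<and>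
    \<not> densely_lineable (Lcard ({m. m \<ge> 2} - (\<Union>k\<in>K. {m. n k \<le> m \<and> m < n (k + 1)})))"
proof -
  interpret superquadratic n using pos growth by unfold_locales
  have "K \<subseteq> {1..}" by (auto simp: K_def)
  moreover have "lineable (Lcard A)"
    using lineable_Lcard_if_blocks[OF block_length_pos blocks_in_A] .
  moreover have "\<not> densely_lineable (Lcard A)"
    using not_densely_lineable_Lcard_if_gaps[OF gaps_in_A] .
  ultimately show ?thesis
    using infinite_K unfolding A_def by blast
qed

end
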